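(* Let $(M_I,\triangleright)$ be a prefactor system and let $i\le i'\le i''$ be indices in $I$. (1) If $M_I$ is direct (with embeddings $emb$), then for all $a_i\in M_i$ and $a_{i''}\in M_{i''}$: $a_{i''}\triangleright a_i$ implies $a_{i''}\triangleright emb_{i,i'}(a_i)$. (2) If $M_I$ is inverse (with projections $proj$), then for all $a_{i'}\in M_{i'}$ and $a_{i''}\in M_{i''}$: $a_{i''}\triangleright a_{i'}$ implies $a_{i''}\triangleright proj_{i',i}(a_{i'})$.
   Context: Let $(I,\le)$ be a non-empty directed preordered set (reflexive, transitive, every finite subset has an upper bound). A system $(M_I,\triangleright)$ consists of sets $M_i$ ($i\in I$, regarded as pairwise disjoint) and, for each $i\le i'$, a relation $\triangleright\subseteq M_{i'}\times M_i$ (written $a_{i'}\triangleright a_i$) which is reflexive when $i=i'$. Elements $a_i\in M_i$, $b_j\in M_j$ are consistent, written $a_i\approx b_j$, iff there are $i'\ge i,j$ and $c\in M_{i'}$ with $c\triangleright a_i$ and $c\triangleright b_j$. A prefactor system is a system such that $a_{i'}\approx a_i\iff a_{i'}\triangleright a_i$ for all $i\le i'$, $a_i\in M_i$, $a_{i'}\in M_{i'}$. A family of $\approx$-embeddings consists of maps $emb_{i,i'}:M_i\to M_{i'}$ ($i\le i'$) preserving $\approx$ (i.e. $a\approx b\Rightarrow emb_{i,i'}(a)\approx emb_{i,i'}(b)$) with $emb_{i,i}(a)\approx a$ and $emb_{i',i''}(emb_{i,i'}(a))\approx emb_{i,i''}(a)$. It is coherent if for all $i\le i'\le i''$: $a_{i'}\triangleright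 a_i\Rightarrow emb_{i',i''}(a_{i'})\triangleright a_i$. A family of $\approx$-projections consists of $\approx$-preserving maps $proj_{i',i}:M_{i'}\to M_i$ ($i\le i'$) with $proj_{i,i}(a)\approx a$ and $proj_{i',i}(proj_{i'',i'}(a))\approx proj_{i'',i}(a)$; it is coherent if for all $i\le i'\le i''$: $a_{i''}\triangleright a_i\Rightarrow proj_{i'',i'}(a_{i''})\triangleright a_i$. A prefactor system is direct iff it has coherent $\approx$-embeddings with $a_{i'}\triangleright a_i\iff a_{i'}\approx emb_{i,i'}(a_i)$ for all $i\le i'$; it is inverse iff it has coherent $\approx$-projections with $a_{i'}\triangleright a_i\iff proj_{i',i}(a_{i'})\approx a_i$ for all $i\le i'$. *)

theory Defs
  imports Main
begin

text \<open>The sets M_i are given by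
  M :: 'i => 'a set; pairwise disjointness is realised by always carrying the index
  along with an element.  R i' a' i a  means  a' (in M_i') |> a (in M_i).\<close>

definition directed_preorder :: "'i set \<Rightarrow> ('i \<Rightarrow> 'i \<Rightarrow> bool) \<Rightarrow> bool" where
  "directed_preorder I le \<longleftrightarrow>
     I \<noteq> {} \<and>
     (\<forall>i\<in>I. le i i) \<and>
     (\<forall>i\<in>I. \<forall>j\<in>I. \<forall>k\<in>I. le i j \<longrightarrow> le j k \<longrightarrow> le i k) \<and>
     (\<forall>F. finite F \<longrightarrow> F \<subseteq> I \<longrightarrow> (\<exists>u\<in>I. \<forall>f\<in>F. le f u))"

definition is_system ::
  "'i set \<Rightarrow> ('i \<Rightarrow> 'i \<Rightarrow> bool) \<Rightarrow> ('i \<Rightarrow> 'a set) \<Rightarrow> ('i \<Rightarrow> 'a \<Rightarrow> 'i \<Rightarrow> 'a \<Rightarrow> bool) \<Rightarrow> bool" where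
  "is_system I le M R \<longleftrightarrow> directed_preorder I le \<and> (\<forall>i\<in>I. \<forall>a\<in>M i. R i a i a)"

definition consistent ::
  "'i set \<Rightarrow> ('i \<Rightarrow> 'i \<Rightarrow> bool) \<Rightarrow> ('i \<Rightarrow> 'a set) \<Rightarrow> ('i \<Rightarrow> 'a \<Rightarrow> 'i \<Rightarrow> 'a \<Rightarrow> bool)
    \<Rightarrow> 'i \<Rightarrow> 'a \<Rightarrow> 'i \<Rightarrow> 'a \<Rightarrow> bool" where
  "consistent I le M R i a j b \<longleftrightarrow>
     (\<exists>k\<in>I. le i k \<and> le j k \<and> (\<exists>c\<in>M k. R k c i a \<and> R k c j b))"

definition prefactor_system ::
  "'i set \<Rightarrow> ('i \<Rightarrow> 'i \<Rightarrow> bool) \<Rightarrow> ('i \<Rightarrow> 'a set) \<Rightarrow> ('i \<Rightarrow> 'a \<Rightarrow> 'i \<Rightarrow> 'a \<Rightarrow> bool) \<Rightarrow> bool" where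
  "prefactor_system I le M R \<longleftrightarrow> is_system I le M R \<and>
     (\<forall>i\<in>I. \<forall>i'\<in>I. le i i' \<longrightarrow> (\<forall>a\<in>M i. \<forall>a'\<in>M i'.
        consistent I le M R i' a' i a \<longleftrightarrow> R i' a' i a))"

definition coherent_embeddings ::
  "'i set \<Rightarrow> ('i \<Rightarrow> 'i \<Rightarrow> bool) \<Rightarrow> ('i \<Rightarrow> 'a set) \<Rightarrow> ('i \<Rightarrow> 'a \<Rightarrow> 'i \<Rightarrow> 'a \<Rightarrow> bool)
    \<Rightarrow> ('i \<Rightarrow> 'i \<Rightarrow> 'a \<Rightarrow> 'a) \<Rightarrow> bool" where
  "coherent_embeddings I le M R emb \<longleftrightarrow>
     (\<forall>i\<in>I. \<forall>i'\<in>I. le i i' \<longrightarrow> (\<forall>a\<in>M i. emb i i' a \<in> M i')) \<and>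
     (\<forall>i\<in>I. \<forall>i'\<in>I. le i i' \<longrightarrow> (\<forall>a\<in>M i. \<forall>b\<in>M i.
        consistent I le M R i a i b \<longrightarrow> consistent I le M R i' (emb i i' a) i' (emb i i' b))) \<and>
     (\<forall>i\<in>I. \<forall>a\<in>M i. consistent I le M R i (emb i i a) i a) \<and>
     (\<forall>i\<in>I. \<forall>i'\<in>I. \<forall>i''\<in>I. le i i' \<longrightarrow> le i' i'' \<longrightarrow> (\<forall>a\<in>M i.
        consistent I le M R i'' (emb i' i'' (emb i i' a)) i'' (emb i i'' a))) \<and>
     (\<forall>i\<in>I. \<forall>i'\<in>I. \<forall>i''\<in>I. le i i' \<longrightarrow> le i' i'' \<longrightarrow> (\<forall>a\<in>M i. \<forall>a'\<in>M i'.
        R i' a' i a \<longrightarrow> R i'' (emb i' i'' a') i a))"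

definition coherent_projections ::
  "'i set \<Rightarrow> ('i \<Rightarrow> 'i \<Rightarrow> bool) \<Rightarrow> ('i \<Rightarrow> 'a set) \<Rightarrow> ('i \<Rightarrow> 'a \<Rightarrow> 'i \<Rightarrow> 'a \<Rightarrow> bool)
    \<Rightarrow> ('i \<Rightarrow> 'i \<Rightarrow> 'a \<Rightarrow> 'a) \<Rightarrow> bool" where
  "coherent_projections I le M R proj \<longleftrightarrow>
     (\<forall>i\<in>I. \<forall>i'\<in>I. le i i' \<longrightarrow> (\<forall>a\<in>M i'. proj i' i a \<in> M i)) \<and>
     (\<forall>i\<in>I. \<forall>i'\<in>I. le i i' \<longrightarrow> (\<forall>a\<in>M i'. \<forall>b\<in>M i'.
        consistent I le M R i' a i' b \<longrightarrow> consistent I le M R i (proj i' i a) i (proj i' i b))) \<and>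
     (\<forall>i\<in>I. \<forall>a\<in>M i. consistent I le M R i (proj i i a) i a) \<and>
     (\<forall>i\<in>I. \<forall>i'\<in>I. \<forall>i''\<in>I. le i i' \<longrightarrow> le i' i'' \<longrightarrow> (\<forall>a\<in>M i''.
        consistent I le M R i (proj i' i (proj i'' i' a)) i (proj i'' i a))) \<and>
     (\<forall>i\<in>I. \<forall>i'\<in>I. \<forall>i''\<in>I. le i i' \<longrightarrow> le i' i'' \<longrightarrow> (\<forall>a\<in>M i. \<forall>a''\<in>M i''.
        R i'' a'' i a \<longrightarrow> R i' (proj i'' i' a'') i a))"

definition direct_system ::
  "'i set \<Rightarrow> ('i \<Rightarrow> 'i \<Rightarrow> bool) \<Rightarrow> ('i \<Rightarrow> 'a set) \<Rightarrow> ('i \<Rightarrow> 'a \<Rightarrow> 'i \<Rightarrow> 'a \<Rightarrow> bool)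
    \<Rightarrow> ('i \<Rightarrow> 'i \<Rightarrow> 'a \<Rightarrow> 'a) \<Rightarrow> bool" where
  "direct_system I le M R emb \<longleftrightarrow> prefactor_system I le M R \<and> coherent_embeddings I le M R emb \<and>
     (\<forall>i\<in>I. \<forall>i'\<in>I. le i i' \<longrightarrow> (\<forall>a\<in>M i. \<forall>a'\<in>M i'.
        R i' a' i a \<longleftrightarrow> consistent I le M R i' a' i' (emb i i' a)))"

definition inverse_system ::
  "'i set \<Rightarrow> ('i \<Rightarrow> 'i \<Rightarrow> bool) \<Rightarrow> ('i \<Rightarrow> 'a set) \<Rightarrow> ('i \<Rightarrow> 'a \<Rightarrow> 'i \<Rightarrow> 'a \<Rightarrow> bool)
    \<Rightarrow> ('i \<Rightarrow> 'i \<Rightarrow> 'a \<Rightarrow> 'a) \<Rightarrow> bool" where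
  "inverse_system I le M R proj \<longleftrightarrow> prefactor_system I le M R \<and> coherent_projections I le M R proj \<and>
     (\<forall>i\<in>I. \<forall>i'\<in>I. le i i' \<longrightarrow> (\<forall>a\<in>M i. \<forall>a'\<in>M i'.
        R i' a' i a \<longleftrightarrow> consistent I le M R i (proj i' i a') i a))"

end

theory Submission
  imports Defs
begin

text \<open>Within one level M j of a prefactor system, R j _ j _ coincides with consistency, so it
  is symmetric; it is also transitive, since y witnesses the consistency of x and z whenever
  y R-dominates both. In the direct case, a'' dominating a means a'' is consistent with
  emb i i'' a at level i'', which is consistent with emb i' i'' (emb i i' a); so a'' dominates
  emb i i' a. In the inverse case, a'' dominating a' means proj i'' i' a'' is consistent with a'
  at level i'; projecting to level i and using that proj i' i (proj i'' i' a'') is consistent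
  with proj i'' i a'' shows that a'' dominates proj i' i a'.\<close>

lemma directed_preorder_trans:
  assumes "directed_preorder I le" "i \<in> I" "j \<in> I" "k \<in> I" "le i j" "le j k"
  shows "le i k"
proof -
  have "\<forall>i\<in>I. \<forall>j\<in>I. \<forall>k\<in>I. le i j \<longrightarrow> le j k \<longrightarrow> le i k"
    using assms(1) unfolding directed_preorder_def by (elim conjE)
  then show ?thesis using assms(2-6) by blast
qed

lemma prefactor_system_le_refl:
  assumes "prefactor_system I le M R" "j \<in> I"
  shows "le j j"
  using assms unfolding prefactor_system_def is_system_def directed_preorder_def
  by (elim conjE) (erule bspec)

lemma prefactor_system_le_trans:
  assumes "prefactor_system I le M R" "i \<in> I" "j \<in> I" "k \<in> I" "le i j" "le j k"
  shows "le i k"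
  using assms(1) unfolding prefactor_system_def is_system_def
  by (elim conjE) (rule directed_preorder_trans[OF _ assms(2-6)])

lemma prefactor_system_consistent_iff:
  assumes "prefactor_system I le M R" "i \<in> I" "i' \<in> I" "le i i'" "a \<in> M i" "a' \<in> M i'"
  shows "consistent I le M R i' a' i a \<longleftrightarrow> R i' a' i a"
  using assms unfolding prefactor_system_def by simp

lemma consistent_sym:
  "consistent I le M R i a j b \<Longrightarrow> consistent I le M R j b i a"
  unfolding consistent_def by blast

lemma prefactor_system_consistent_trans:
  assumes P: "prefactor_system I le M R" and j: "j \<in> I"
    and xyz: "x \<in> M j" "y \<in> M j" "z \<in> M j"
    and xy: "consistent I le M R j x j y" and yz: "consistent I le M R j y j z"
  shows "consistent I le M R j x j z"
proof -
  note refl = prefactor_system_le_refl[OF P j]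
  have "R j y j x"
    using prefactor_system_consistent_iff[OF P j j refl xyz(1,2)] consistent_sym[OF xy] by blast
  moreover have "R j y j z"
    using prefactor_system_consistent_iff[OF P j j refl xyz(3,2)] yz by blast
  ultimately show ?thesis
    unfolding consistent_def using j refl xyz(2) by blast
qed

lemma coherent_embeddings_mem:
  assumes "coherent_embeddings I le M R emb" "i \<in> I" "i' \<in> I" "le i i'" "a \<in> M i"
  shows "emb i i' a \<in> M i'"
  using assms unfolding coherent_embeddings_def by blast

lemma coherent_embeddings_comp:
  assumes "coherent_embeddings I le M R emb"
    "i \<in> I" "i' \<in> I" "i'' \<in> I" "le i i'" "le i' i''" "a \<in> M i"
  shows "consistent I le M R i'' (emb i' i'' (emb i i' a)) i'' (emb i i'' a)"
proof -
  have "\<forall>i\<in>I. \<forall>i'\<in>I. \<forall>i''\<in>I. le i i' \<longrightarrow> le i' i'' \<longrightarrow> (\<forall>a\<in>M i.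
      consistent I le M R i'' (emb i' i'' (emb i i' a)) i'' (emb i i'' a))"
    using assms(1) unfolding coherent_embeddings_def by (elim conjE)
  then show ?thesis using assms(2-7) by blast
qed

lemma direct_system_R_iff:
  assumes "direct_system I le M R emb" "i \<in> I" "i' \<in> I" "le i i'" "a \<in> M i" "a' \<in> M i'"
  shows "R i' a' i a \<longleftrightarrow> consistent I le M R i' a' i' (emb i i' a)"
  using assms unfolding direct_system_def by blast

lemma direct_system_R_emb:
  assumes D: "direct_system I le M R emb"
    and idx: "i \<in> I" "i' \<in> I" "i'' \<in> I" "le i i'" "le i' i''"
    and a: "a \<in> M i" and a'': "a'' \<in> M i''" and R: "R i'' a'' i a"
  shows "R i'' a'' i' (emb i i' a)"
proof -
  have P: "prefactor_system I le M R" and C: "coherent_embeddings I le M R emb"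
    using D unfolding direct_system_def by blast+
  have "le i i''" using prefactor_system_le_trans[OF P idx] .
  define e where "e = emb i i' a"
  have e: "e \<in> M i'" unfolding e_def using coherent_embeddings_mem[OF C idx(1,2,4) a] .
  have ee: "emb i' i'' e \<in> M i''" using coherent_embeddings_mem[OF C idx(2,3,5) e] .
  have ea: "emb i i'' a \<in> M i''" using coherent_embeddings_mem[OF C idx(1,3) \<open>le i i''\<close> a] .
  have "consistent I le M R i'' a'' i'' (emb i i'' a)"
    using direct_system_R_iff[OF D idx(1,3) \<open>le i i''\<close> a a''] R by blast
  moreover have "consistent I le M R i'' (emb i i'' a) i'' (emb i' i'' e)"
    unfolding e_def by (rule consistent_sym[OF coherent_embeddings_comp[OF C idx a]])
  ultimately have "consistent I le M R i'' a'' i'' (emb i' i'' e)"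
    using prefactor_system_consistent_trans[OF P idx(3) a'' ea ee] by blast
  then show ?thesis
    unfolding e_def using direct_system_R_iff[OF D idx(2,3,5) e a''] e_def by blast
qed

lemma coherent_projections_mem:
  assumes "coherent_projections I le M R proj" "i \<in> I" "i' \<in> I" "le i i'" "a \<in> M i'"
  shows "proj i' i a \<in> M i"
  using assms unfolding coherent_projections_def by blast

lemma coherent_projections_consistent:
  assumes "coherent_projections I le M R proj" "i \<in> I" "i' \<in> I" "le i i'"
    "a \<in> M i'" "b \<in> M i'" "consistent I le M R i' a i' b"
  shows "consistent I le M R i (proj i' i a) i (proj i' i b)"
proof -
  have "\<forall>i\<in>I. \<forall>i'\<in>I. le i i' \<longrightarrow> (\<forall>a\<in>M i'. \<forall>b\<in>M i'.
      consistent I le M R i' a i' b \<longrightarrow> consistent I le M R i (proj i' i a) i (proj i' i b))"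
    using assms(1) unfolding coherent_projections_def by (elim conjE)
  then show ?thesis using assms(2-7) by blast
qed

lemma coherent_projections_comp:
  assumes "coherent_projections I le M R proj"
    "i \<in> I" "i' \<in> I" "i'' \<in> I" "le i i'" "le i' i''" "a \<in> M i''"
  shows "consistent I le M R i (proj i' i (proj i'' i' a)) i (proj i'' i a)"
proof -
  have "\<forall>i\<in>I. \<forall>i'\<in>I. \<forall>i''\<in>I. le i i' \<longrightarrow> le i' i'' \<longrightarrow> (\<forall>a\<in>M i''.
      consistent I le M R i (proj i' i (proj i'' i' a)) i (proj i'' i a))"
    using assms(1) unfolding coherent_projections_def by (elim conjE)
  then show ?thesis using assms(2-7) by blast
qed

lemma inverse_system_R_iff:
  assumes "inverse_system I le M R proj" "i \<in> I" "i' \<in> I" "le i i'" "a \<in> M i" "a' \<in> M i'"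
  shows "R i' a' i a \<longleftrightarrow> consistent I le M R i (proj i' i a') i a"
  using assms unfolding inverse_system_def by blast

lemma inverse_system_R_proj:
  assumes V: "inverse_system I le M R proj"
    and idx: "i \<in> I" "i' \<in> I" "i'' \<in> I" "le i i'" "le i' i''"
    and a': "a' \<in> M i'" and a'': "a'' \<in> M i''" and R: "R i'' a'' i' a'"
  shows "R i'' a'' i (proj i' i a')"
proof -
  have P: "prefactor_system I le M R" and C: "coherent_projections I le M R proj"
    using V unfolding inverse_system_def by blast+
  have "le i i''" using prefactor_system_le_trans[OF P idx] .
  define q where "q = proj i'' i' a''"
  have q: "q \<in> M i'" unfolding q_def using coherent_projections_mem[OF C idx(2,3,5) a''] .
  have pq: "proj i' i q \<in> M i" using coherent_projections_mem[OF C idx(1,2,4) q] .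
  have pa': "proj i' i a' \<in> M i" using coherent_projections_mem[OF C idx(1,2,4) a'] .
  have pa'': "proj i'' i a'' \<in> M i"
    using coherent_projections_mem[OF C idx(1,3) \<open>le i i''\<close> a''] .
  have "consistent I le M R i' q i' a'"
    unfolding q_def using inverse_system_R_iff[OF V idx(2,3,5) a' a''] R by blast
  then have "consistent I le M R i (proj i' i q) i (proj i' i a')"
    by (rule coherent_projections_consistent[OF C idx(1,2,4) q a'])
  moreover have "consistent I le M R i (proj i'' i a'') i (proj i' i q)"
    unfolding q_def by (rule consistent_sym[OF coherent_projections_comp[OF C idx a'']])
  ultimately have "consistent I le M R i (proj i'' i a'') i (proj i' i a')"
    using prefactor_system_consistent_trans[OF P idx(1) pa'' pq pa'] by blast
  then show ?thesis
    using inverse_system_R_iff[OF V idx(1,3) \<open>le i i''\<close> pa' a''] by blast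
qed

theorem lemma2p5:
  fixes I :: "'i set" and le :: "'i \<Rightarrow> 'i \<Rightarrow> bool" and M :: "'i \<Rightarrow> 'a set"
    and R :: "'i \<Rightarrow> 'a \<Rightarrow> 'i \<Rightarrow> 'a \<Rightarrow> bool"
    and emb proj :: "'i \<Rightarrow> 'i \<Rightarrow> 'a \<Rightarrow> 'a"
  assumes "prefactor_system I le M R"
    and "i \<in> I" and "i' \<in> I" and "i'' \<in> I" and "le i i'" and "le i' i''"
  shows "(direct_system I le M R emb \<longrightarrow>
            (\<forall>a\<in>M i. \<forall>a''\<in>M i''. R i'' a'' i a \<longrightarrow> R i'' a'' i' (emb i i' a)))
       \<and> (inverse_system I le M R proj \<longrightarrow>
            (\<forall>a'\<in>M i'. \<forall>a''\<in>M i''. R i'' a'' i' a' \<longrightarrow> R i'' a'' i (proj i' i a')))"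
proof (intro conjI impI ballI)
  fix a a''
  assume "direct_system I le M R emb" "a \<in> M i" "a'' \<in> M i''" "R i'' a'' i a"
  from direct_system_R_emb[OF this(1) assms(2-6) this(2-4)]
  show "R i'' a'' i' (emb i i' a)" .
next
  fix a' a''
  assume "inverse_system I le M R proj" "a' \<in> M i'" "a'' \<in> M i''" "R i'' a'' i' a'"
  from inverse_system_R_proj[OF this(1) assms(2-6) this(2-4)]
  show "R i'' a'' i (proj i' i a')" .
qed

end
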